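(* Let $H_\alpha=-\Delta_\alpha+V$ be the Schrödinger operator with periodic magnetic potential $\alpha$ and periodic electric potential $V$ on a periodic graph $\mathcal G$. Fix a basis $\{\mathbf c_1,\dots,\mathbf c_\beta\}$ of the cycle space of $\mathcal G_*$ such that $\tau(\mathbf c_1),\dots,\tau(\mathbf c_d)$ is the standard basis of $\mathbb Z^d$ and $\{\mathbf c_{d+1},\dots,\mathbf c_\beta\}$ is a basis of the space $\mathcal C^0$ of cycles of $\mathcal G_*$ with zero index, let $\mathcal P$ be the associated projection (see context), and put $k_o=-(\alpha(\mathbf c_1),\dots,\alpha(\mathbf c_d))$. (i) For every $n\in\mathbb N$ and $\tilde k\in\mathbb T^d$, $$\operatorname{Tr}H_\alpha^n(\tilde k+k_o)=\sum_{\mathbf c\in\widetilde{\mathcal C}_n}\omega(\mathbf c)e^{-i\phi_o(\mathbf c,\tilde k)}=\sum_{\mathbf c\in\widetilde{\mathcal C}_n}\omega(\mathbf c)\cos\phi_o(\mathbf c,\tilde k),\qquad \phi_o(\mathbf c,\tilde k)=\alpha(\mathcal P\mathbf c)+\langle\tau(\mathbf c),\tilde k\rangle,$$ or, in Fourier form, $\operatorname{Tr}H_\alpha^n(\tilde k+k_o)=\sum_{\mathrm m\in\mathbb Z^d,\|\mathrm m\|\le n\tau_+}\mathcal T^o_{\alpha,n,\mathrm m}e^{-i\langle\mathrm m,\tilde k\rangle}$ with $\mathcal T^o_{\alpha,n,\mathrm m}=\sum_{\mathbf c\in\widetilde{\mathcal C}_n^{\mathrm m}}\omega(\mathbf c)e^{-i\alpha(\mathcal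 P\mathbf c)}$, where $\tau_+=\max_{\mathbf e\in\mathcal A_*}\|\tau(\mathbf e)\|$. In particular, if $\beta=d$, then $\mathcal P\mathbf c=0$ for all $\mathbf c\in\widetilde{\mathcal C}$ and $\operatorname{Tr}H_\alpha^n(\tilde k+k_o)=\operatorname{Tr}H_0^n(\tilde k)$ for all $n\in\mathbb N$. (ii) If two periodic magnetic potentials $\alpha_1,\alpha_2$ have the same flux through each of the $\beta-d$ basis cycles $\mathbf c_{d+1},\dots,\mathbf c_\beta$ of $\mathcal C^0$, then $\sigma(H_{\alpha_1})=\sigma(H_{\alpha_2})$.
   Context: Let $\Gamma\subset\mathbb R^d$ be a lattice with basis $\mathfrak a_1,\dots,\mathfrak a_d$ and fundamental cell $\Omega=\{\sum_sx_s\mathfrak a_s:(x_s)\in[0,1)^d\}$. Let $\mathcal G=(\mathcal V,\mathcal E)$ be a connected, locally finite, infinite graph embedded in $\mathbb R^d$ (loops, multiple edges allowed), invariant under $\Gamma$-translations, with finite quotient $\mathcal G_*=(\mathcal V_*,\mathcal E_* )$; $\nu=\#\mathcal V_*$; Betti number $\beta=\#\mathcal E_*-\#\mathcal V_*+1$. Oriented edges $\mathcal A,\mathcal A_*$; $\underline{\mathbf e}$ inverse; $\varkappa_x$ = number of oriented edges starting at $x$. Edge index: $x=x_0+[x]$, $x_0\in\mathcal V\cap\Omega$, $[x]\in\Gamma$ with coordinates $[x]_{\mathbb A}\in\mathbb Z^d$; $\tau((x,y))=[y]_{\mathbb A}-[x]_{\mathbb A}$, defined on $\mathcal A_*$. Periodic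 magnetic potential $\alpha:\mathcal A\to\mathbb R$ ($\alpha(\underline{\mathbf e})=-\alpha(\mathbf e)$, $\Gamma$-invariant); $V$ real $\Gamma$-periodic. $H_\alpha=-\Delta_\alpha+V$, $\Delta_\alpha=\varkappa-A_\alpha$, $(A_\alpha f)_x=\sum_{\mathbf e=(x,y)\in\mathcal A}e^{i\alpha(\mathbf e)}f_y$; fiber operators $H_\alpha(k)=A_\alpha(k)-\varkappa+V$ on $\mathbb C^\nu$, $(A_\alpha(k)f)_x=\sum_{\mathbf e=(x,y)\in\mathcal A_*}e^{i(\alpha(\mathbf e)+\langle\tau(\mathbf e),k\rangle)}f_y$, $k\in\mathbb T^d=\mathbb R^d/(2\pi\mathbb Z)^d$; $\sigma(H_\alpha)=\bigcup_k\sigma(H_\alpha(k))$; $H_0$ is $H_\alpha$ with $\alpha=0$. Cycles: ordered sequences of oriented edges $(\mathbf e_1,\dots,\mathbf e_n)$ with $\mathbf e_s=(x_{s-1},x_s)$, $x_n=x_0$ (cyclic shifts distinct; backtracking allowed); index $\tau(\mathbf c)=\sum\tau(\mathbf e)$; flux $\alpha(\mathbf c)=(\sum\alpha(\mathbf e))\bmod 2\pi$; both extend additively to the integer cycle space (first homology with $\mathbb Z$ coefficients). Modified graph $\widetilde{\mathcal G}_*$: add at each $x\in\mathcal V_*$ one oriented loop $\mathbf e_x$ (single oriented edge) with $\tau(\mathbf e_x)=0$, $\alpha(\mathbf e_x)=0$; weights $\omega(\mathbf e)=1$ on $\mathcal A_*$, $\omega(\mathbf e_x)=V_x-\varkappa_x$,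 $\omega(\mathbf c)=\prod_s\omega(\mathbf e_s)$; $\widetilde{\mathcal C}$ is the cycle space of $\widetilde{\mathcal G}_*$, $\widetilde{\mathcal C}_n$ (resp. $\widetilde{\mathcal C}_n^{\mathrm m}$) the set of cycles of length $n$ (resp. and index $\mathrm m$). Such a basis $\mathbf c_1,\dots,\mathbf c_\beta$ exists, and $\{\mathbf c_1,\dots,\mathbf c_\beta\}\cup\{\mathbf e_x\}$ is a basis of $\widetilde{\mathcal C}$, so every $\mathbf c\in\widetilde{\mathcal C}$ is uniquely $\mathbf c=\sum_{s=1}^\beta n_s(\mathbf c)\mathbf c_s+\sum_x n_x(\mathbf c)\mathbf e_x$ with integer coefficients; the projection is $\mathcal P\mathbf c=\sum_{s=d+1}^\beta n_s(\mathbf c)\mathbf c_s\in\mathcal C^0$. *)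

theory Defs
  imports "HOL-Analysis.Analysis"
begin

text \<open>Quotient graph G_* : vertices = finite type 'v, oriented edges = finite type 'e,
  src/tgt/ie give start, end and inverse of an oriented edge; tau :: 'e => int^'d is the
  edge index; alpha the magnetic potential; V the electric potential.\<close>

definition quot_graph :: "('e::finite \<Rightarrow> 'v::finite) \<Rightarrow> ('e \<Rightarrow> 'v) \<Rightarrow> ('e \<Rightarrow> 'e)
    \<Rightarrow> ('e \<Rightarrow> int^'d::finite) \<Rightarrow> bool" where
  "quot_graph src tgt ie tau \<longleftrightarrow>
     (\<forall>e. ie (ie e) = e \<and> ie e \<noteq> e \<and> src (ie e) = tgt e \<and> tau (ie e) = - tau e) \<and>
     (\<forall>x y. (x, y) \<in> (range (\<lambda>e. (src e, tgt e)))\<^sup>*)"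

definition magnetic_pot :: "('e \<Rightarrow> 'e) \<Rightarrow> ('e \<Rightarrow> real) \<Rightarrow> bool" where
  "magnetic_pot ie alpha \<longleftrightarrow> (\<forall>e. alpha (ie e) = - alpha e)"

text \<open>Betti number: #E_* - #V_* + 1, where #E_* is half the number of oriented edges.\<close>
definition betti :: "('e::finite \<Rightarrow> 'v::finite) \<Rightarrow> int" where
  "betti src = int (CARD('e) div 2) - int CARD('v) + 1"

definition kappa :: "('e::finite \<Rightarrow> 'v) \<Rightarrow> 'v \<Rightarrow> nat" where
  "kappa src x = card {e. src e = x}"

definition rvec :: "int^'d::finite \<Rightarrow> real^'d" where
  "rvec m = (\<chi> j. real_of_int (m $ j))"

definition ip :: "int^'d::finite \<Rightarrow> real^'d \<Rightarrow> real" where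
  "ip m k = (\<Sum>j\<in>UNIV. real_of_int (m $ j) * k $ j)"

definition Hfib :: "('e::finite \<Rightarrow> 'v::finite) \<Rightarrow> ('e \<Rightarrow> 'v) \<Rightarrow> ('e \<Rightarrow> int^'d::finite)
    \<Rightarrow> ('e \<Rightarrow> real) \<Rightarrow> ('v \<Rightarrow> real) \<Rightarrow> real^'d \<Rightarrow> complex^'v^'v" where
  "Hfib src tgt tau alpha V k = (\<chi> x y.
      (\<Sum>e\<in>{e. src e = x \<and> tgt e = y}. exp (\<i> * complex_of_real (alpha e + ip (tau e) k)))
      + (if x = y then complex_of_real (V x - real (kappa src x)) else 0))"

primrec mat_pow :: "'a::semiring_1^'n::finite^'n \<Rightarrow> nat \<Rightarrow> 'a^'n^'n" where
  "mat_pow A 0 = mat 1"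
| "mat_pow A (Suc n) = A ** mat_pow A n"

definition mat_spectrum :: "complex^'n::finite^'n \<Rightarrow> complex set" where
  "mat_spectrum A = {l. \<exists>v. v \<noteq> 0 \<and> A *v v = l *s v}"

definition spec_H :: "('e::finite \<Rightarrow> 'v::finite) \<Rightarrow> ('e \<Rightarrow> 'v) \<Rightarrow> ('e \<Rightarrow> int^'d::finite)
    \<Rightarrow> ('e \<Rightarrow> real) \<Rightarrow> ('v \<Rightarrow> real) \<Rightarrow> complex set" where
  "spec_H src tgt tau alpha V = (\<Union>k. mat_spectrum (Hfib src tgt tau alpha V k))"

text \<open>Modified graph: a step is either an oriented edge (Inl e) or the added loop at x (Inr x).\<close>
definition ssrc :: "('e \<Rightarrow> 'v) \<Rightarrow> 'e + 'v \<Rightarrow> 'v" where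
  "ssrc src s = (case s of Inl e \<Rightarrow> src e | Inr x \<Rightarrow> x)"

definition stgt :: "('e \<Rightarrow> 'v) \<Rightarrow> 'e + 'v \<Rightarrow> 'v" where
  "stgt tgt s = (case s of Inl e \<Rightarrow> tgt e | Inr x \<Rightarrow> x)"

text \<open>Cycles of the modified graph of length n (n >= 1): closed sequences of steps;
  cyclic shifts are distinct lists, backtracking allowed.\<close>
definition mcycles :: "('e \<Rightarrow> 'v) \<Rightarrow> ('e \<Rightarrow> 'v) \<Rightarrow> nat \<Rightarrow> ('e + 'v) list set" where
  "mcycles src tgt n = {c. length c = n \<and> c \<noteq> [] \<and>
      (\<forall>i<length c. stgt tgt (c ! i) = ssrc src (c ! ((i + 1) mod length c)))}"

definition omega :: "('e::finite \<Rightarrow> 'v) \<Rightarrow> ('v \<Rightarrow> real) \<Rightarrow> ('e + 'v) list \<Rightarrow> real" where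
  "omega src V c = prod_list (map (\<lambda>s. case s of Inl e \<Rightarrow> 1 | Inr x \<Rightarrow> V x - real (kappa src x)) c)"

definition walk_tau :: "('e \<Rightarrow> int^'d::finite) \<Rightarrow> ('e + 'v) list \<Rightarrow> int^'d" where
  "walk_tau tau c = sum_list (map (\<lambda>s. case s of Inl e \<Rightarrow> tau e | Inr x \<Rightarrow> 0) c)"

text \<open>Integer 1-chains on G_*: antisymmetric functions 'e => int. The homology class (edge part)
  of a cycle of the modified graph; the loops e_x form the remaining free summand.\<close>
definition walk_chain :: "('e \<Rightarrow> 'e) \<Rightarrow> ('e + 'v) list \<Rightarrow> 'e \<Rightarrow> int" where
  "walk_chain ie c = (\<lambda>e. int (count_list c (Inl e)) - int (count_list c (Inl (ie e))))"

definition cycle_space :: "('e::finite \<Rightarrow> 'v) \<Rightarrow> ('e \<Rightarrow> 'e) \<Rightarrow> ('e \<Rightarrow> int) set" where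
  "cycle_space tgt ie = {f. (\<forall>e. f (ie e) = - f e) \<and> (\<forall>x. (\<Sum>e\<in>{e. tgt e = x}. f e) = 0)}"

text \<open>Index and flux extended additively to chains (each oriented edge pair counted once).\<close>
definition tau_chain :: "('e::finite \<Rightarrow> int^'d::finite) \<Rightarrow> ('e \<Rightarrow> int) \<Rightarrow> int^'d" where
  "tau_chain tau f = (\<chi> j. (\<Sum>e\<in>UNIV. f e * tau e $ j) div 2)"

definition flux :: "('e::finite \<Rightarrow> real) \<Rightarrow> ('e \<Rightarrow> int) \<Rightarrow> real" where
  "flux alpha f = (\<Sum>e\<in>UNIV. real_of_int (f e) * alpha e) / 2"

definition combo :: "('d::finite \<Rightarrow> 'e \<Rightarrow> int) \<Rightarrow> (nat \<Rightarrow> 'e \<Rightarrow> int) \<Rightarrow> nat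
    \<Rightarrow> ('d \<Rightarrow> int) \<Rightarrow> (nat \<Rightarrow> int) \<Rightarrow> 'e \<Rightarrow> int" where
  "combo cd c0 m a b = (\<lambda>e. (\<Sum>j\<in>UNIV. a j * cd j e) + (\<Sum>s<m. b s * c0 s e))"

definition Pproj :: "('d::finite \<Rightarrow> 'e \<Rightarrow> int) \<Rightarrow> (nat \<Rightarrow> 'e \<Rightarrow> int) \<Rightarrow> nat
    \<Rightarrow> ('e \<Rightarrow> int) \<Rightarrow> 'e \<Rightarrow> int" where
  "Pproj cd c0 m z = (THE p. \<exists>a b. z = combo cd c0 m a b \<and> p = (\<lambda>e. \<Sum>s<m. b s * c0 s e))"

end

(*
  The n-th power of the fiber matrix H_alpha(k) expands entrywise into a sum over walks of length
  n in the quotient graph with a loop added at every vertex, so its trace is a sum over closed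
  walks c of omega(c) exp(i (alpha(c) + <tau(c), k>)).  The edge chain of a closed walk is a cycle;
  in the basis c_1, ..., c_beta its coordinates on c_1, ..., c_d are exactly its index tau(c), so
  alpha(c) = alpha(P c) - <tau(c), k_o>, and shifting k by k_o leaves the phase phi_o(c, k).
  Reversing walks permutes the closed walks of each length, preserves omega and negates phi_o;
  this gives the exp(-i phi_o) and cosine forms, and grouping the cycles by index gives the
  Fourier form.  If beta = d there is no zero-index part, so P vanishes.

  For (ii), let t be the differences of the fluxes of alpha_1 and alpha_2 through c_1, ..., c_d.
  Then alpha_1 - alpha_2 - <tau, t> has flux in 2 pi Z through every cycle, so on the connected
  graph it is a discrete gradient dg modulo 2 pi.  Conjugation by diag(exp(i g)) maps
  H_alpha_1(k) to H_alpha_2(k + t), hence the unions of the fiber spectra agree.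
*)

theory Submission
  imports Defs
begin

section \<open>Walks in the modified quotient graph\<close>

fun is_walk :: "('e \<Rightarrow> 'v) \<Rightarrow> ('e \<Rightarrow> 'v) \<Rightarrow> ('e + 'v) list \<Rightarrow> 'v \<Rightarrow> 'v \<Rightarrow> bool" where
  "is_walk src tgt [] x y \<longleftrightarrow> x = y"
| "is_walk src tgt (s # c) x y \<longleftrightarrow> ssrc src s = x \<and> is_walk src tgt c (stgt tgt s) y"

lemma is_walk_iff_successively:
  "c \<noteq> [] \<Longrightarrow> is_walk src tgt c x y \<longleftrightarrow>
     ssrc src (hd c) = x \<and> stgt tgt (last c) = y \<and> successively (\<lambda>s t. stgt tgt s = ssrc src t) c"
proof (induction c arbitrary: x)
  case (Cons s c)
  show ?case
  proof (cases "c = []")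
    case False
    then have "successively (\<lambda>s t. stgt tgt s = ssrc src t) (s # c) \<longleftrightarrow>
               stgt tgt s = ssrc src (hd c) \<and> successively (\<lambda>s t. stgt tgt s = ssrc src t) c"
      by (cases c) simp_all
    with False show ?thesis
      using Cons.IH[of "stgt tgt s"] by auto
  qed simp
qed simp

lemma is_walk_append:
  "is_walk src tgt (c1 @ c2) x y \<longleftrightarrow> (\<exists>z. is_walk src tgt c1 x z \<and> is_walk src tgt c2 z y)"
  by (induction c1 arbitrary: x) auto

lemma successively_cyclic_iff:
  assumes "xs \<noteq> []"
  shows "(\<forall>i<length xs. P (xs ! i) (xs ! ((i + 1) mod length xs))) \<longleftrightarrow>
         P (last xs) (hd xs) \<and> successively P xs"
proof -
  obtain k where k: "length xs = Suc k"
    using assms by (cases xs) auto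
  have "(\<forall>i<length xs. P (xs ! i) (xs ! ((i + 1) mod length xs))) \<longleftrightarrow>
        P (xs ! k) (xs ! 0) \<and> (\<forall>i<k. P (xs ! i) (xs ! Suc i))"
  proof -
    have "(\<forall>i<Suc k. Q i) \<longleftrightarrow> Q k \<and> (\<forall>i<k. Q i)" for Q
      by (auto simp: less_Suc_eq)
    then show ?thesis
      unfolding k by simp
  qed
  then show ?thesis
    using k assms by (simp add: successively_conv_nth last_conv_nth hd_conv_nth)
qed

lemma mcycles_iff_closed_walk_at:
  assumes "n \<ge> 1"
  shows "c \<in> mcycles src tgt n \<longleftrightarrow>
           length c = n \<and> is_walk src tgt c (ssrc src (hd c)) (ssrc src (hd c))"
proof (cases "c = []")
  case False
  then show ?thesis
    unfolding mcycles_def mem_Collect_eq successively_cyclic_iff[OF False, where P = "\<lambda>s t. stgt tgt s = ssrc src t"]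
    by (auto simp: is_walk_iff_successively)
qed (use assms in \<open>auto simp: mcycles_def\<close>)

lemma mcycles_iff_closed_walk:
  assumes "n \<ge> 1"
  shows "c \<in> mcycles src tgt n \<longleftrightarrow> length c = n \<and> (\<exists>x. is_walk src tgt c x x)"
proof -
  have "ssrc src (hd c) = x" if "is_walk src tgt c x x" "length c = n" for x
    using that assms by (cases c) auto
  then show ?thesis
    using mcycles_iff_closed_walk_at[OF assms] by blast
qed

lemma rtrancl_edges_imp_walk:
  "(x, y) \<in> (range (\<lambda>e. (src e, tgt e)))\<^sup>* \<Longrightarrow> \<exists>c. is_walk src tgt c x y"
proof (induction rule: rtrancl_induct)
  case base
  show ?case
    by (rule exI[of _ "[]"]) simp
next
  case (step y z)
  obtain e where "src e = y" "tgt e = z"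
    using step.hyps(2) by auto
  moreover obtain c where "is_walk src tgt c x y"
    using step.IH by blast
  ultimately have "is_walk src tgt (c @ [Inl e]) x z"
    by (auto simp: is_walk_append ssrc_def stgt_def)
  then show ?case ..
qed

lemma finite_mcycles: "finite (mcycles src tgt n :: ('e::finite + 'v::finite) list set)"
proof (rule finite_subset)
  show "finite {c :: ('e + 'v) list. set c \<subseteq> UNIV \<and> length c = n}"
    by (rule finite_lists_length_eq) simp
qed (auto simp: mcycles_def)

definition walk_sum :: "('e \<Rightarrow> 'a::monoid_add) \<Rightarrow> ('e + 'v) list \<Rightarrow> 'a" where
  "walk_sum f c = sum_list (map (case_sum f (\<lambda>_. 0)) c)"

lemma walk_sum_Nil [simp]: "walk_sum f [] = 0"
  and walk_sum_Cons_Inl [simp]: "walk_sum f (Inl e # c) = f e + walk_sum f c"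
  and walk_sum_Cons_Inr [simp]: "walk_sum f (Inr x # c) = walk_sum f c"
  by (simp_all add: walk_sum_def)

lemma walk_sum_zero [simp]: "walk_sum (\<lambda>_. 0) c = 0"
  by (induction c) (simp_all add: walk_sum_def split: sum.split)

lemma walk_sum_append: "walk_sum f (c1 @ c2) = walk_sum f c1 + walk_sum f c2"
  by (simp add: walk_sum_def)

lemma walk_sum_add:
  "walk_sum (\<lambda>e. f e + g e) c = walk_sum f c + walk_sum g c" for f g :: "'e \<Rightarrow> 'a::comm_monoid_add"
proof -
  have case_sum_add:
    "case_sum (\<lambda>e. f e + g e) (\<lambda>_. 0) = (\<lambda>s. case_sum f (\<lambda>_. 0) s + case_sum g (\<lambda>_. 0) s)"
    by (rule ext, simp split: sum.split)
  show ?thesis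
    unfolding walk_sum_def case_sum_add by (rule sum_list_addf)
qed

lemma walk_sum_uminus:
  "walk_sum (\<lambda>e. - f e) c = - walk_sum f c" for f :: "'e \<Rightarrow> 'a::ab_group_add"
proof (induction c)
  case (Cons s c)
  then show ?case by (cases s) simp_all
qed simp

lemma walk_sum_nth: "walk_sum (\<lambda>e. f e $ j) c = walk_sum f c $ j"
proof (induction c)
  case (Cons s c)
  then show ?case by (cases s) simp_all
qed simp

lemma walk_tau_eq_walk_sum: "walk_tau tau = walk_sum tau"
  by (simp add: fun_eq_iff walk_tau_def walk_sum_def)

definition reverse_walk :: "('e \<Rightarrow> 'e) \<Rightarrow> ('e + 'v) list \<Rightarrow> ('e + 'v) list" where
  "reverse_walk ie c = rev (map (map_sum ie id) c)"

lemma length_reverse_walk [simp]: "length (reverse_walk ie c) = length c"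
  by (simp add: reverse_walk_def)

lemma walk_sum_reverse_walk:
  "walk_sum f (reverse_walk ie c) = walk_sum (f \<circ> ie) c" for f :: "'e \<Rightarrow> 'a::comm_monoid_add"
  by (simp add: walk_sum_def reverse_walk_def rev_map[symmetric] sum_list_rev case_sum_map_sum comp_def cong: sum.case_cong)

lemma omega_reverse_walk: "omega src V (reverse_walk ie c) = omega src V c"
  by (simp add: omega_def reverse_walk_def rev_map[symmetric] prod_list.rev case_sum_map_sum comp_def cong: sum.case_cong)

lemma ip_add: "ip (a + b) k = ip a k + ip b k"
  by (simp add: ip_def sum.distrib algebra_simps)

lemma ip_uminus: "ip (- a) k = - ip a k"
  by (simp add: ip_def sum_negf)

lemma ip_add_right: "ip a (k + k') = ip a k + ip a k'"
  by (simp add: ip_def sum.distrib algebra_simps)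

lemma ip_axis: "ip (axis j 1) t = t $ j"
  by (simp add: ip_def axis_def if_distrib[of "\<lambda>x. real_of_int x * _"] cong: if_cong)

lemma ip_walk_tau: "ip (walk_tau tau c) k = walk_sum (\<lambda>e. ip (tau e) k) c"
proof (induction c)
  case Nil
  then show ?case by (simp add: walk_tau_eq_walk_sum ip_def)
next
  case (Cons s c)
  then show ?case by (cases s) (simp_all add: walk_tau_eq_walk_sum ip_add)
qed

section \<open>The trace formula\<close>

definition step_weight :: "('e::finite \<Rightarrow> 'v) \<Rightarrow> ('e \<Rightarrow> int^'d::finite) \<Rightarrow> ('e \<Rightarrow> real)
    \<Rightarrow> ('v \<Rightarrow> real) \<Rightarrow> real^'d \<Rightarrow> 'e + 'v \<Rightarrow> complex" where
  "step_weight src tau alpha V k = case_sum (\<lambda>e. exp (\<i> * complex_of_real (alpha e + ip (tau e) k)))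
     (\<lambda>x. complex_of_real (V x - real (kappa src x)))"

definition walks :: "('e \<Rightarrow> 'v) \<Rightarrow> ('e \<Rightarrow> 'v) \<Rightarrow> nat \<Rightarrow> 'v \<Rightarrow> 'v \<Rightarrow> ('e + 'v) list set"
  where
  "walks src tgt n x y = {c. length c = n \<and> is_walk src tgt c x y}"

lemma finite_walks: "finite (walks src tgt n x y :: ('e::finite + 'v::finite) list set)"
proof (rule finite_subset)
  show "finite {c :: ('e + 'v) list. set c \<subseteq> UNIV \<and> length c = n}"
    by (rule finite_lists_length_eq) simp
qed (auto simp: walks_def)

lemma walks_Suc:
  "walks src tgt (Suc n) x y =
     (\<lambda>(s, c). s # c) ` (SIGMA s:{s. ssrc src s = x}. walks src tgt n (stgt tgt s) y)"
  by (auto simp: walks_def image_iff length_Suc_conv)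

lemma Hfib_eq_sum_steps:
  fixes src tgt :: "'e::finite \<Rightarrow> 'v::finite"
  shows "Hfib src tgt tau alpha V k $ x $ y =
           (\<Sum>s | ssrc src s = x \<and> stgt tgt s = y. step_weight src tau alpha V k s)"
proof -
  have steps: "{s. ssrc src s = x \<and> stgt tgt s = y} = {e. src e = x \<and> tgt e = y} <+> {z. z = x \<and> z = y}"
    (is "?L = ?R")
  proof (rule set_eqI)
    show "s \<in> ?L \<longleftrightarrow> s \<in> ?R" for s
      by (cases s) (auto simp: ssrc_def stgt_def)
  qed
  have "{z. z = x \<and> z = y} = (if x = y then {x} else {})"
    by auto
  then show ?thesis
    unfolding steps by (simp add: sum.Plus Hfib_def step_weight_def)
qed

lemma mat_pow_Hfib_eq_sum_walks:
  "mat_pow (Hfib src tgt tau alpha V k) n $ x $ y =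
     (\<Sum>c\<in>walks src tgt n x y. prod_list (map (step_weight src tau alpha V k) c))"
proof (induction n arbitrary: x)
  case 0
  have "walks src tgt 0 x y = (if x = y then {[]} else {})"
    by (auto simp: walks_def)
  then show ?case
    by (simp add: mat_def)
next
  case (Suc n)
  let ?w = "step_weight src tau alpha V k"
  let ?F = "\<lambda>z. \<Sum>c\<in>walks src tgt n z y. prod_list (map ?w c)"
  have "mat_pow (Hfib src tgt tau alpha V k) (Suc n) $ x $ y
      = (\<Sum>z\<in>UNIV. \<Sum>s | ssrc src s = x \<and> stgt tgt s = z. ?w s * ?F z)"
    by (simp add: matrix_matrix_mult_def Suc Hfib_eq_sum_steps sum_distrib_right)
  also have "\<dots> = (\<Sum>z\<in>UNIV. \<Sum>s\<in>{s \<in> {s. ssrc src s = x}. stgt tgt s = z}. ?w s * ?F (stgt tgt s))"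
    by (intro sum.cong) auto
  also have "\<dots> = (\<Sum>s | ssrc src s = x. ?w s * ?F (stgt tgt s))"
    by (rule sum.group) auto
  also have "\<dots> = (\<Sum>(s, c)\<in>(SIGMA s:{s. ssrc src s = x}. walks src tgt n (stgt tgt s) y).
                     prod_list (map ?w (s # c)))"
    by (simp add: sum_distrib_left sum.Sigma finite_walks)
  also have "\<dots> = (\<Sum>c\<in>walks src tgt (Suc n) x y. prod_list (map ?w c))"
    unfolding walks_Suc by (subst sum.reindex) (auto simp: inj_on_def intro!: sum.cong)
  finally show ?case .
qed

lemma prod_list_step_weight:
  "prod_list (map (step_weight src tau alpha V k) c) =
     complex_of_real (omega src V c) * exp (\<i> * complex_of_real (walk_sum (\<lambda>e. alpha e + ip (tau e) k) c))"
proof (induction c)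
  case (Cons s c)
  then show ?case
    by (cases s) (simp_all add: step_weight_def omega_def distrib_left exp_add)
qed (simp add: omega_def)

theorem trace_mat_pow_Hfib:
  assumes "n \<ge> 1"
  shows "trace (mat_pow (Hfib src tgt tau alpha V k) n) =
           (\<Sum>c\<in>mcycles src tgt n. complex_of_real (omega src V c) *
              exp (\<i> * complex_of_real (walk_sum alpha c + ip (walk_tau tau c) k)))"
proof -
  have closed_walks: "walks src tgt n x x = {c \<in> mcycles src tgt n. ssrc src (hd c) = x}" for x
  proof -
    have "ssrc src (hd c) = x" if "is_walk src tgt c x x" "length c = n" for c
      using that assms by (cases c) auto
    then show ?thesis
      using mcycles_iff_closed_walk_at[OF assms] by (auto simp: walks_def)
  qed
  have "trace (mat_pow (Hfib src tgt tau alpha V k) n) =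
          (\<Sum>x\<in>UNIV. \<Sum>c | c \<in> mcycles src tgt n \<and> ssrc src (hd c) = x.
             complex_of_real (omega src V c) *
               exp (\<i> * complex_of_real (walk_sum alpha c + ip (walk_tau tau c) k)))"
    by (simp add: trace_def mat_pow_Hfib_eq_sum_walks prod_list_step_weight closed_walks
          walk_sum_add ip_walk_tau)
  also have "\<dots> = (\<Sum>c\<in>mcycles src tgt n. complex_of_real (omega src V c) *
              exp (\<i> * complex_of_real (walk_sum alpha c + ip (walk_tau tau c) k)))"
    by (rule sum.group) (auto simp: finite_mcycles)
  finally show ?thesis .
qed

lemma rvec_add: "rvec (a + b) = rvec a + rvec b"
  by (simp add: rvec_def vec_eq_iff)

lemma norm_rvec_walk_tau_le:
  assumes "\<And>e. norm (rvec (tau e)) \<le> T" and "0 \<le> T"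
  shows "norm (rvec (walk_tau tau c)) \<le> real (length c) * T"
proof (induction c)
  case Nil
  then show ?case by (simp add: walk_tau_eq_walk_sum rvec_def vec_eq_iff)
next
  case (Cons s c)
  then show ?case
  proof (cases s)
    case (Inl e)
    have "norm (rvec (walk_tau tau (s # c))) \<le> norm (rvec (tau e)) + norm (rvec (walk_tau tau c))"
      by (simp add: Inl walk_tau_eq_walk_sum rvec_add norm_triangle_ineq)
    also have "\<dots> \<le> T + real (length c) * T"
      using assms(1) Cons.IH by (rule add_mono)
    finally show ?thesis
      by (simp add: algebra_simps)
  qed (use Cons.IH assms(2) in \<open>simp add: walk_tau_eq_walk_sum, simp add: algebra_simps\<close>)
qed

lemma finite_int_vectors_norm_le: "finite {mm :: int^'d::finite. norm (rvec mm) \<le> R}"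
proof -
  let ?N = "\<lceil>R\<rceil>"
  have "{mm :: int^'d. norm (rvec mm) \<le> R} \<subseteq> vec_lambda ` (PiE UNIV (\<lambda>_. {- ?N..?N}))"
  proof
    fix mm :: "int^'d"
    assume "mm \<in> {mm. norm (rvec mm) \<le> R}"
    then have bound: "real_of_int \<bar>mm $ j\<bar> \<le> R" for j
      using component_le_norm_cart[of "rvec mm" j] by (simp add: rvec_def)
    have "\<bar>mm $ j\<bar> \<le> ?N" for j
      using bound[of j] unfolding le_ceiling_iff by linarith
    then have "vec_nth mm \<in> PiE UNIV (\<lambda>_. {- ?N..?N})"
      by (simp add: PiE_UNIV_domain abs_le_iff minus_le_iff)
    then show "mm \<in> vec_lambda ` (PiE UNIV (\<lambda>_. {- ?N..?N}))"
      by (metis image_eqI vec_lambda_eta)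
  qed
  then show ?thesis
    by (rule finite_subset) (intro finite_imageI finite_PiE; simp)
qed

lemma sum_mcycles_group_by_index:
  fixes tau :: "'e::finite \<Rightarrow> int^'d::finite" and src tgt :: "'e \<Rightarrow> 'v::finite"
  assumes tau_le: "\<And>e. norm (rvec (tau e)) \<le> T"
  shows "(\<Sum>c\<in>mcycles src tgt n. F c * exp (- \<i> * complex_of_real (ip (walk_tau tau c) k))) =
         (\<Sum>mm\<in>{mm. norm (rvec mm) \<le> real n * T}.
            (\<Sum>c\<in>{c \<in> mcycles src tgt n. walk_tau tau c = mm}. F c) * exp (- \<i> * complex_of_real (ip mm k)))"
proof -
  have "0 \<le> T"
    using order_trans[OF norm_ge_zero tau_le] .
  then have "walk_tau tau ` mcycles src tgt n \<subseteq> {mm. norm (rvec mm) \<le> real n * T}"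
    using norm_rvec_walk_tau_le[OF tau_le] by (auto simp: mcycles_def)
  then have "(\<Sum>c\<in>mcycles src tgt n. F c * exp (- \<i> * complex_of_real (ip (walk_tau tau c) k))) =
             (\<Sum>mm\<in>{mm. norm (rvec mm) \<le> real n * T}. \<Sum>c\<in>{c \<in> mcycles src tgt n. walk_tau tau c = mm}.
                F c * exp (- \<i> * complex_of_real (ip (walk_tau tau c) k)))"
    by (intro sum.group[symmetric] finite_mcycles finite_int_vectors_norm_le)
  then show ?thesis
    by (simp add: sum_distrib_right)
qed

section \<open>Chains and fluxes\<close>

text \<open>A pairing of two antisymmetric functions on oriented edges counts every geometric edge
  twice, which is why \<^const>\<open>flux\<close> and \<^const>\<open>tau_chain\<close> halve it.\<close>

definition chain_pairing :: "('e::finite \<Rightarrow> 'a::comm_ring_1) \<Rightarrow> ('e \<Rightarrow> int) \<Rightarrow> 'a" where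
  "chain_pairing h f = (\<Sum>e\<in>UNIV. of_int (f e) * h e)"

lemma flux_eq_chain_pairing: "flux alpha f = chain_pairing alpha f / 2"
  by (simp add: flux_def chain_pairing_def)

lemma tau_chain_nth: "tau_chain tau f $ j = chain_pairing (\<lambda>e. tau e $ j) f div 2"
  by (simp add: tau_chain_def chain_pairing_def)

lemma chain_pairing_add: "chain_pairing h (\<lambda>e. f e + g e) = chain_pairing h f + chain_pairing h g"
  by (simp add: chain_pairing_def sum.distrib distrib_right)

lemma chain_pairing_lincomb:
  "finite S \<Longrightarrow>
     chain_pairing h (\<lambda>e. \<Sum>s\<in>S. b s * z s e) = (\<Sum>s\<in>S. of_int (b s) * chain_pairing h (z s))"
  by (simp add: chain_pairing_def sum_distrib_left sum_distrib_right sum.swap[of _ S] mult_ac)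

lemma chain_pairing_combo:
  "chain_pairing h (combo cd c0 m a b) =
     (\<Sum>j\<in>UNIV. of_int (a j) * chain_pairing h (cd j)) + (\<Sum>s<m. of_int (b s) * chain_pairing h (c0 s))"
  by (simp add: combo_def chain_pairing_add chain_pairing_lincomb)

lemma chain_pairing_diff_left: "chain_pairing (\<lambda>e. h e - h' e) f = chain_pairing h f - chain_pairing h' f"
  by (simp add: chain_pairing_def sum_subtractf right_diff_distrib)

lemma flux_combo:
  "flux alpha (combo cd c0 m a b) =
     (\<Sum>j\<in>UNIV. a j * flux alpha (cd j)) + (\<Sum>s<m. b s * flux alpha (c0 s))"
  by (simp add: flux_eq_chain_pairing chain_pairing_combo add_divide_distrib sum_divide_distrib)

lemma walk_chain_Cons: "walk_chain ie (s # c) = (\<lambda>e. walk_chain ie [s] e + walk_chain ie c e)"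
  by (simp add: walk_chain_def fun_eq_iff)

lemma even_sum_involution_invariant:
  fixes g :: "'a \<Rightarrow> int"
  assumes "finite S" and "\<forall>x\<in>S. i x \<in> S \<and> i x \<noteq> x \<and> i (i x) = x \<and> g (i x) = g x"
  shows "even (sum g S)"
  using assms
proof (induction "card S" arbitrary: S rule: less_induct)
  case less
  show ?case
  proof (cases "S = {}")
    case False
    then obtain x where x: "x \<in> S" by blast
    let ?S' = "S - {x, i x}"
    have ix: "i x \<in> S - {x}" "g (i x) = g x"
      using less.prems(2) x by blast+
    have "sum g S = g x + (g (i x) + sum g (S - {x} - {i x}))"
      using less.prems(1) x ix by (simp add: sum.remove)
    also have "S - {x} - {i x} = ?S'"
      by auto
    finally have "sum g S = 2 * g x + sum g ?S'"
      using ix by simp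
    moreover have "even (sum g ?S')"
    proof (rule less.hyps)
      show "card ?S' < card S"
        using less.prems(1) x by (intro psubset_card_mono) auto
      show "\<forall>y\<in>?S'. i y \<in> ?S' \<and> i y \<noteq> y \<and> i (i y) = y \<and> g (i y) = g y"
      proof
        fix y assume y: "y \<in> ?S'"
        then have "y \<in> S" by blast
        then have iy: "i y \<in> S" "i y \<noteq> y" "i (i y) = y" "g (i y) = g y"
          using less.prems(2) by blast+
        have "i (i x) = x"
          using less.prems(2) x by blast
        then have "i y \<notin> {x, i x}"
          using y iy(3) by force
        with iy show "i y \<in> ?S' \<and> i y \<noteq> y \<and> i (i y) = y \<and> g (i y) = g y"
          by blast
      qed
    qed (use less.prems(1) in simp)
    ultimately show ?thesis by simp
  qed simp
qed

section \<open>Gauge equivalence\<close>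

definition gauge_equivalent :: "('e \<Rightarrow> 'v) \<Rightarrow> ('e \<Rightarrow> 'v) \<Rightarrow> ('e \<Rightarrow> int^'d::finite)
    \<Rightarrow> ('e \<Rightarrow> real) \<Rightarrow> ('e \<Rightarrow> real) \<Rightarrow> real^'d \<Rightarrow> bool" where
  "gauge_equivalent src tgt tau a1 a2 t \<longleftrightarrow>
     (\<exists>g. \<forall>e. \<exists>q::int. a1 e = a2 e + g (tgt e) - g (src e) + ip (tau e) t + 2 * pi * of_int q)"

lemma gauge_equivalent_sym:
  assumes "gauge_equivalent src tgt tau a1 a2 t"
  shows "gauge_equivalent src tgt tau a2 a1 (- t)"
proof -
  obtain g where g: "\<forall>e. \<exists>q::int. a1 e = a2 e + g (tgt e) - g (src e) + ip (tau e) t + 2 * pi * of_int q"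
    using assms by (auto simp: gauge_equivalent_def)
  have "\<exists>q::int. a2 e = a1 e + (- g (tgt e)) - (- g (src e)) + ip (tau e) (- t) + 2 * pi * of_int q" for e
  proof -
    obtain q :: int where "a1 e = a2 e + g (tgt e) - g (src e) + ip (tau e) t + 2 * pi * of_int q"
      using g by blast
    then show ?thesis
      by (intro exI[of _ "- q"]) (simp add: ip_def sum_negf)
  qed
  then show ?thesis
    unfolding gauge_equivalent_def by (intro exI[where x = "\<lambda>v. - g v"]) simp
qed

lemma mat_spectrum_subset_if_diagonal_similar:
  fixes A B :: "complex^'n::finite^'n"
  assumes similar: "\<And>x y. u x * A $ x $ y = B $ x $ y * u y" and nonzero: "\<And>y. u y \<noteq> 0"
  shows "mat_spectrum A \<subseteq> mat_spectrum B"
proof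
  fix l
  assume "l \<in> mat_spectrum A"
  then obtain v where "v \<noteq> 0" and v: "A *v v = l *s v"
    by (auto simp: mat_spectrum_def)
  define w where "w = (\<chi> y. u y * v $ y)"
  have "w \<noteq> 0"
    using \<open>v \<noteq> 0\<close> nonzero by (auto simp: w_def vec_eq_iff)
  moreover have "B *v w = l *s w"
  proof -
    have "(B *v w) $ x = u x * (A *v v) $ x" for x
      by (simp add: matrix_vector_mult_def w_def sum_distrib_left similar mult.assoc[symmetric])
    then show ?thesis
      using v by (simp add: vec_eq_iff w_def)
  qed
  ultimately show "l \<in> mat_spectrum B"
    by (auto simp: mat_spectrum_def)
qed

lemma Hfib_gauge_similar:
  assumes "\<forall>e. \<exists>q::int. a1 e = a2 e + g (tgt e) - g (src e) + ip (tau e) t + 2 * pi * of_int q"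
  shows "exp (\<i> * complex_of_real (g x)) * Hfib src tgt tau a1 V k $ x $ y =
           Hfib src tgt tau a2 V (k + t) $ x $ y * exp (\<i> * complex_of_real (g y))"
proof -
  have edge: "exp (\<i> * complex_of_real (g x)) * exp (\<i> * complex_of_real (a1 e + ip (tau e) k)) =
                exp (\<i> * complex_of_real (a2 e + ip (tau e) (k + t))) * exp (\<i> * complex_of_real (g y))"
    if "e \<in> {e. src e = x \<and> tgt e = y}" for e
  proof -
    obtain q :: int where q: "a1 e = a2 e + g (tgt e) - g (src e) + ip (tau e) t + 2 * pi * of_int q"
      using assms by blast
    have "g x + (a1 e + ip (tau e) k) = (a2 e + ip (tau e) (k + t) + g y) + 2 * pi * of_int q"
      using q that by (simp add: ip_add_right)
    then have "exp (\<i> * complex_of_real (g x + (a1 e + ip (tau e) k))) =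
                 exp (\<i> * complex_of_real (a2 e + ip (tau e) (k + t) + g y))"
      by (simp add: distrib_left exp_add exp_two_pi_i' mult_ac)
    then show ?thesis
      by (simp add: distrib_left exp_add)
  qed
  have diag: "exp (\<i> * complex_of_real (g x)) * (if x = y then d else 0) =
                (if x = y then d else 0) * exp (\<i> * complex_of_real (g y))" for d :: complex
    by simp
  have "(\<Sum>e | src e = x \<and> tgt e = y.
            exp (\<i> * complex_of_real (g x)) * exp (\<i> * complex_of_real (a1 e + ip (tau e) k))) =
        (\<Sum>e | src e = x \<and> tgt e = y.
            exp (\<i> * complex_of_real (a2 e + ip (tau e) (k + t))) * exp (\<i> * complex_of_real (g y)))"
    by (rule sum.cong[OF refl edge])
  then show ?thesis
    unfolding Hfib_def vec_lambda_beta distrib_left distrib_right sum_distrib_left sum_distrib_right diag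
    by simp
qed

lemma spec_H_subset_if_gauge_equivalent:
  assumes "gauge_equivalent src tgt tau a1 a2 t"
  shows "spec_H src tgt tau a1 V \<subseteq> spec_H src tgt tau a2 V"
proof -
  obtain g where "\<forall>e. \<exists>q::int. a1 e = a2 e + g (tgt e) - g (src e) + ip (tau e) t + 2 * pi * of_int q"
    using assms by (auto simp: gauge_equivalent_def)
  then have "mat_spectrum (Hfib src tgt tau a1 V k) \<subseteq> mat_spectrum (Hfib src tgt tau a2 V (k + t))" for k
    by (intro mat_spectrum_subset_if_diagonal_similar[where u = "\<lambda>x. exp (\<i> * complex_of_real (g x))"]
        Hfib_gauge_similar) simp_all
  then show ?thesis
    unfolding spec_H_def by blast
qed

lemma spec_H_eq_if_gauge_equivalent:
  "gauge_equivalent src tgt tau a1 a2 t \<Longrightarrow> spec_H src tgt tau a1 V = spec_H src tgt tau a2 V"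
  by (metis gauge_equivalent_sym spec_H_subset_if_gauge_equivalent subset_antisym)

locale quotient_graph =
  fixes src tgt :: "'e::finite \<Rightarrow> 'v::finite" and ie :: "'e \<Rightarrow> 'e" and tau :: "'e \<Rightarrow> int^'d::finite"
  assumes ie_ie [simp]: "ie (ie e) = e"
    and ie_neq [simp]: "ie e \<noteq> e"
    and src_ie [simp]: "src (ie e) = tgt e"
    and tau_ie [simp]: "tau (ie e) = - tau e"
begin

lemma tgt_ie [simp]: "tgt (ie e) = src e"
  using src_ie[of "ie e"] by simp

lemma neq_ie [simp]: "e \<noteq> ie e"
  using ie_neq[of e] by metis

lemma reverse_walk_reverse_walk [simp]: "reverse_walk ie (reverse_walk ie c) = c"
  by (simp add: reverse_walk_def rev_map[symmetric] sum.map_comp comp_def sum.map_ident)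

lemma walk_sum_reverse_walk_antisym:
  fixes f :: "'e \<Rightarrow> 'a::ab_group_add"
  assumes "\<forall>e. f (ie e) = - f e"
  shows "walk_sum f (reverse_walk ie c) = - walk_sum f c"
  using assms by (simp add: walk_sum_reverse_walk comp_def walk_sum_uminus)

lemma is_walk_reverse_walk:
  "is_walk src tgt c x y \<Longrightarrow> is_walk src tgt (reverse_walk ie c) y x"
proof (induction c arbitrary: x)
  case (Cons s c)
  then have "is_walk src tgt [map_sum ie id s] (stgt tgt s) x"
    by (cases s) (auto simp: ssrc_def stgt_def)
  with Cons show ?case
    by (auto simp: reverse_walk_def is_walk_append)
qed (simp add: reverse_walk_def)

lemma reverse_walk_in_mcycles:
  "n \<ge> 1 \<Longrightarrow> c \<in> mcycles src tgt n \<Longrightarrow> reverse_walk ie c \<in> mcycles src tgt n"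
  by (auto simp: mcycles_iff_closed_walk dest: is_walk_reverse_walk)

lemma sum_mcycles_reverse_walk:
  assumes "n \<ge> 1"
  shows "(\<Sum>c\<in>mcycles src tgt n. F (reverse_walk ie c)) = (\<Sum>c\<in>mcycles src tgt n. F c)"
  by (rule sum.reindex_bij_witness[where i = "reverse_walk ie" and j = "reverse_walk ie"])
    (simp_all add: reverse_walk_in_mcycles[OF assms])

lemma sum_mcycles_exp_conj:
  assumes "n \<ge> 1" and phi_reverse: "\<And>c. c \<in> mcycles src tgt n \<Longrightarrow> phi (reverse_walk ie c) = - phi c"
  shows "(\<Sum>c\<in>mcycles src tgt n. complex_of_real (omega src V c) * exp (\<i> * complex_of_real (phi c))) =
         (\<Sum>c\<in>mcycles src tgt n. complex_of_real (omega src V c) * exp (- \<i> * complex_of_real (phi c)))"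
  by (subst sum_mcycles_reverse_walk[OF assms(1), symmetric])
    (simp add: omega_reverse_walk phi_reverse)

lemma sum_mcycles_cos:
  assumes "n \<ge> 1" and "\<And>c. c \<in> mcycles src tgt n \<Longrightarrow> phi (reverse_walk ie c) = - phi c"
  shows "(\<Sum>c\<in>mcycles src tgt n. complex_of_real (omega src V c) * exp (- \<i> * complex_of_real (phi c))) =
         (\<Sum>c\<in>mcycles src tgt n. complex_of_real (omega src V c * cos (phi c)))"
proof -
  have cos_eq: "complex_of_real (omega src V c * cos (phi c)) =
          (complex_of_real (omega src V c) * exp (\<i> * complex_of_real (phi c)) +
           complex_of_real (omega src V c) * exp (- \<i> * complex_of_real (phi c))) / 2" for c
    by (simp add: cos_of_real[symmetric] cos_exp_eq distrib_left)
  show ?thesis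
    unfolding cos_eq sum_divide_distrib[symmetric] sum.distrib
    using sum_mcycles_exp_conj[where phi = phi, OF assms] by simp
qed

lemma trace_mat_pow_Hfib_zero_potential:
  assumes n: "n \<ge> 1"
  shows "trace (mat_pow (Hfib src tgt tau (\<lambda>_. 0) V k) n) =
           (\<Sum>c\<in>mcycles src tgt n. complex_of_real (omega src V c) *
              exp (- \<i> * complex_of_real (ip (walk_tau tau c) k)))"
proof -
  have "trace (mat_pow (Hfib src tgt tau (\<lambda>_. 0) V k) n) =
          (\<Sum>c\<in>mcycles src tgt n. complex_of_real (omega src V c) *
             exp (\<i> * complex_of_real (ip (walk_tau tau c) k)))"
    by (simp add: trace_mat_pow_Hfib[OF n])
  also have "\<dots> = (\<Sum>c\<in>mcycles src tgt n. complex_of_real (omega src V c) *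
                     exp (- \<i> * complex_of_real (ip (walk_tau tau c) k)))"
    by (rule sum_mcycles_exp_conj[OF n])
      (simp add: walk_tau_eq_walk_sum walk_sum_reverse_walk_antisym ip_uminus)
  finally show ?thesis .
qed

lemma chain_pairing_walk_chain:
  fixes h :: "'e \<Rightarrow> 'a::comm_ring_1"
  assumes h_antisym: "\<forall>e. h (ie e) = - h e"
  shows "chain_pairing h (walk_chain ie c) = 2 * walk_sum h c"
proof (induction c)
  case Nil
  then show ?case by (simp add: chain_pairing_def walk_chain_def)
next
  case (Cons s c)
  have step: "chain_pairing h (walk_chain ie [s]) = 2 * walk_sum h [s]"
  proof (cases s)
    case (Inl e0)
    have "chain_pairing h (walk_chain ie [s]) = (\<Sum>e\<in>UNIV. (if e = e0 then h e else 0) - (if e = ie e0 then h e else 0))"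
      unfolding chain_pairing_def walk_chain_def Inl
      by (intro sum.cong) auto
    also have "\<dots> = h e0 - h (ie e0)"
      by (simp add: sum_subtractf)
    finally show ?thesis
      using Inl h_antisym by simp
  qed (simp add: chain_pairing_def walk_chain_def)
  show ?case
    unfolding walk_chain_Cons[of ie s c] chain_pairing_add step Cons.IH
    by (cases s) (simp_all add: distrib_left)
qed

lemma flux_walk_chain: "magnetic_pot ie alpha \<Longrightarrow> flux alpha (walk_chain ie c) = walk_sum alpha c"
  by (simp add: flux_eq_chain_pairing chain_pairing_walk_chain magnetic_pot_def)

lemma tau_chain_walk_chain: "tau_chain tau (walk_chain ie c) = walk_tau tau c"
  by (simp add: vec_eq_iff tau_chain_nth chain_pairing_walk_chain walk_sum_nth walk_tau_eq_walk_sum)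

lemma walk_chain_boundary:
  "is_walk src tgt c a b \<Longrightarrow>
     (\<Sum>e | tgt e = x. walk_chain ie c e) = (if x = b then 1 else 0) - (if x = a then 1 else 0)"
proof (induction c arbitrary: a)
  case (Cons s c)
  have step: "(\<Sum>e | tgt e = x. walk_chain ie [s] e) = (if x = stgt tgt s then 1 else 0) - (if x = a then 1 else 0)"
  proof (cases s)
    case (Inl e0)
    have "(\<Sum>e | tgt e = x. walk_chain ie [s] e) =
            (\<Sum>e | tgt e = x. if e = e0 then 1 else 0) - (\<Sum>e | tgt e = x. if e = ie e0 then 1 else 0)"
      unfolding sum_subtractf[symmetric] Inl walk_chain_def by (intro sum.cong) auto
    then show ?thesis
      using Cons.prems Inl by (simp add: ssrc_def stgt_def)
  qed (use Cons.prems in \<open>simp add: walk_chain_def ssrc_def stgt_def\<close>)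
  show ?case
    unfolding walk_chain_Cons[of ie s c] sum.distrib step
    using Cons.prems Cons.IH[of "stgt tgt s"] by simp
qed (simp add: walk_chain_def)

lemma walk_chain_in_cycle_space: "is_walk src tgt c x x \<Longrightarrow> walk_chain ie c \<in> cycle_space tgt ie"
  by (simp add: cycle_space_def walk_chain_boundary) (simp add: walk_chain_def)

lemma even_chain_pairing:
  fixes h :: "'e \<Rightarrow> int"
  assumes "\<forall>e. f (ie e) = - f e" and "\<forall>e. h (ie e) = - h e"
  shows "even (chain_pairing h f)"
  unfolding chain_pairing_def
  by (rule even_sum_involution_invariant[where i = ie]) (simp_all add: assms ie_neq)

text \<open>Evenness makes the \<open>div 2\<close> in \<^const>\<open>tau_chain\<close> exact, so that
  \<^const>\<open>tau_chain\<close> is additive on antisymmetric chains.\<close>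

lemma chain_pairing_tau_eq_tau_chain:
  assumes "\<forall>e. f (ie e) = - f e"
  shows "chain_pairing (\<lambda>e. tau e $ j) f = 2 * tau_chain tau f $ j"
  using even_chain_pairing[OF assms, of "\<lambda>e. tau e $ j"] by (simp add: tau_chain_nth)

lemma flux_ip_tau:
  assumes "\<forall>e. f (ie e) = - f e"
  shows "flux (\<lambda>e. ip (tau e) t) f = ip (tau_chain tau f) t"
proof -
  have "chain_pairing (\<lambda>e. ip (tau e) t) f =
          (\<Sum>e\<in>UNIV. \<Sum>j\<in>UNIV. t $ j * (of_int (f e) * of_int (tau e $ j)))"
    by (simp add: chain_pairing_def ip_def sum_distrib_left mult_ac)
  also have "\<dots> = (\<Sum>j\<in>UNIV. t $ j * of_int (chain_pairing (\<lambda>e. tau e $ j) f))"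
    by (subst sum.swap) (simp add: chain_pairing_def sum_distrib_left)
  finally show ?thesis
    by (simp add: flux_eq_chain_pairing chain_pairing_tau_eq_tau_chain[OF assms] ip_def
        sum_divide_distrib mult_ac)
qed

lemma gauge_potential_exists:
  assumes conn: "\<forall>x y. (x, y) \<in> (range (\<lambda>e. (src e, tgt e)))\<^sup>*"
    and mag: "magnetic_pot ie beta"
    and closed: "\<And>c x. is_walk src tgt c x x \<Longrightarrow> \<exists>q::int. walk_sum beta c = 2 * pi * of_int q"
  shows "\<exists>g. \<forall>e. \<exists>q::int. beta e = g (tgt e) - g (src e) + 2 * pi * of_int q"
proof -
  fix x0 :: 'v
  have "\<forall>y. \<exists>c. is_walk src tgt c x0 y"
    using conn by (simp add: rtrancl_edges_imp_walk)
  then obtain W where W: "\<forall>y. is_walk src tgt (W y) x0 y"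
    using choice[of "\<lambda>y c. is_walk src tgt c x0 y"] by blast
  define g where "g y = walk_sum beta (W y)" for y
  have "\<exists>q::int. beta e = g (tgt e) - g (src e) + 2 * pi * of_int q" for e
  proof -
    let ?c = "W (src e) @ [Inl e] @ reverse_walk ie (W (tgt e))"
    have "is_walk src tgt [Inl e] (src e) (tgt e)"
      by (simp add: ssrc_def stgt_def)
    then have "is_walk src tgt ?c x0 x0"
      using W is_walk_reverse_walk unfolding is_walk_append by blast
    then obtain q :: int where q: "walk_sum beta ?c = 2 * pi * of_int q"
      using closed by blast
    have "walk_sum beta ?c = g (src e) + beta e - g (tgt e)"
      using mag unfolding magnetic_pot_def g_def
      by (simp add: walk_sum_append walk_sum_reverse_walk_antisym)
    with q have "beta e = g (tgt e) - g (src e) + 2 * pi * of_int q"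
      by simp
    then show ?thesis ..
  qed
  then show ?thesis
    by blast
qed

end

section \<open>Cycle bases adapted to the index\<close>

locale cycle_basis = quotient_graph src tgt ie tau
  for src tgt :: "'e::finite \<Rightarrow> 'v::finite" and ie and tau :: "'e \<Rightarrow> int^'d::finite" +
  fixes cd :: "'d \<Rightarrow> 'e \<Rightarrow> int" and c0 :: "nat \<Rightarrow> 'e \<Rightarrow> int" and m :: nat
  assumes cd_cycle: "cd j \<in> cycle_space tgt ie"
    and c0_cycle: "s < m \<Longrightarrow> c0 s \<in> cycle_space tgt ie"
    and combo_spans: "z \<in> cycle_space tgt ie \<Longrightarrow> \<exists>a b. z = combo cd c0 m a b"
    and combo_indep: "combo cd c0 m a b = (\<lambda>_. 0) \<Longrightarrow> (\<forall>j. a j = 0) \<and> (\<forall>s<m. b s = 0)"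
    and tau_chain_cd: "tau_chain tau (cd j) = axis j 1"
    and tau_chain_c0: "s < m \<Longrightarrow> tau_chain tau (c0 s) = 0"
begin

lemma Pproj_combo: "Pproj cd c0 m (combo cd c0 m a b) = (\<lambda>e. \<Sum>s<m. b s * c0 s e)"
  unfolding Pproj_def
proof (rule the_equality)
  fix p
  assume "\<exists>a' b'. combo cd c0 m a b = combo cd c0 m a' b' \<and> p = (\<lambda>e. \<Sum>s<m. b' s * c0 s e)"
  then obtain a' b' where eq: "combo cd c0 m a b = combo cd c0 m a' b'" and p: "p = (\<lambda>e. \<Sum>s<m. b' s * c0 s e)"
    by blast
  have "combo cd c0 m (\<lambda>j. a j - a' j) (\<lambda>s. b s - b' s) e = combo cd c0 m a b e - combo cd c0 m a' b' e" for e
    by (simp add: combo_def sum_subtractf left_diff_distrib)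
  then have "combo cd c0 m (\<lambda>j. a j - a' j) (\<lambda>s. b s - b' s) = (\<lambda>_. 0)"
    using eq by (simp add: fun_eq_iff)
  then have "\<forall>s<m. b s = b' s"
    using combo_indep by fastforce
  then show "p = (\<lambda>e. \<Sum>s<m. b s * c0 s e)"
    unfolding p by (auto intro: sum.cong)
qed blast

lemma combo_antisym: "combo cd c0 m a b (ie e) = - combo cd c0 m a b e"
proof -
  have "cd j (ie e) = - cd j e" "s < m \<Longrightarrow> c0 s (ie e) = - c0 s e" for j s
    using cd_cycle c0_cycle by (simp_all add: cycle_space_def)
  then show ?thesis
    by (simp add: combo_def sum_negf)
qed

lemma tau_chain_combo: "tau_chain tau (combo cd c0 m a b) = (\<chi> j. a j)"
proof -
  have cd_c0: "chain_pairing (\<lambda>e. tau e $ j) (cd i) = (if i = j then 2 else 0)"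
    "s < m \<Longrightarrow> chain_pairing (\<lambda>e. tau e $ j) (c0 s) = 0" for i j s
    using cd_cycle c0_cycle tau_chain_cd tau_chain_c0
    by (simp_all add: chain_pairing_tau_eq_tau_chain cycle_space_def axis_def)
  have "2 * tau_chain tau (combo cd c0 m a b) $ j = 2 * a j" for j
    using chain_pairing_tau_eq_tau_chain[of "combo cd c0 m a b" j] combo_antisym
    by (simp add: chain_pairing_combo cd_c0 if_distrib[of "(*) _"] cong: if_cong)
  then show ?thesis
    by (simp add: vec_eq_iff)
qed

lemma cycle_space_decomp:
  assumes "z \<in> cycle_space tgt ie"
  obtains b where "z = combo cd c0 m (\<lambda>j. tau_chain tau z $ j) b"
proof -
  obtain a b where z: "z = combo cd c0 m a b"
    using combo_spans[OF assms] by blast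
  then have "a = (\<lambda>j. tau_chain tau z $ j)"
    by (simp add: tau_chain_combo)
  with z show ?thesis
    by (intro that) simp
qed

lemma flux_Pproj:
  assumes "z \<in> cycle_space tgt ie"
  shows "flux alpha (Pproj cd c0 m z) = flux alpha z + ip (tau_chain tau z) (\<chi> j. - flux alpha (cd j))"
proof -
  obtain b where z: "z = combo cd c0 m (\<lambda>j. tau_chain tau z $ j) b"
    using cycle_space_decomp[OF assms] .
  have "flux alpha z = (\<Sum>j\<in>UNIV. tau_chain tau z $ j * flux alpha (cd j)) + (\<Sum>s<m. b s * flux alpha (c0 s))"
    by (subst z) (simp add: flux_eq_chain_pairing chain_pairing_combo add_divide_distrib sum_divide_distrib)
  moreover have "flux alpha (Pproj cd c0 m z) = (\<Sum>s<m. b s * flux alpha (c0 s))"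
    by (subst z) (simp add: Pproj_combo flux_eq_chain_pairing chain_pairing_lincomb sum_divide_distrib)
  ultimately show ?thesis
    by (simp add: ip_def sum_negf)
qed

lemma Pproj_eq_0_if_no_zero_index_cycles:
  assumes "m = 0" and "z \<in> cycle_space tgt ie"
  shows "Pproj cd c0 m z = (\<lambda>_. 0)"
  using combo_spans[OF assms(2)] assms(1) Pproj_combo by auto

lemma flux_Pproj_walk_chain:
  assumes "magnetic_pot ie alpha" and "is_walk src tgt c x x"
  shows "flux alpha (Pproj cd c0 m (walk_chain ie c)) =
           walk_sum alpha c + ip (walk_tau tau c) (\<chi> j. - flux alpha (cd j))"
  using flux_Pproj[OF walk_chain_in_cycle_space[OF assms(2)], of alpha]
  by (simp add: flux_walk_chain[OF assms(1)] tau_chain_walk_chain)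

lemma trace_mat_pow_Hfib_shifted:
  assumes mag: "magnetic_pot ie alpha" and n: "n \<ge> 1"
  shows "trace (mat_pow (Hfib src tgt tau alpha V (k + (\<chi> j. - flux alpha (cd j)))) n) =
           (\<Sum>c\<in>mcycles src tgt n. complex_of_real (omega src V c) *
              exp (\<i> * complex_of_real (flux alpha (Pproj cd c0 m (walk_chain ie c)) + ip (walk_tau tau c) k)))"
proof -
  have "walk_sum alpha c + ip (walk_tau tau c) (k + (\<chi> j. - flux alpha (cd j))) =
          flux alpha (Pproj cd c0 m (walk_chain ie c)) + ip (walk_tau tau c) k"
    if c: "c \<in> mcycles src tgt n" for c
  proof -
    obtain x where "is_walk src tgt c x x"
      using c unfolding mcycles_iff_closed_walk[OF n] by blast
    then show ?thesis
      using flux_Pproj_walk_chain[OF mag] ip_add_right[of "walk_tau tau c" k] by fastforce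
  qed
  then show ?thesis
    unfolding trace_mat_pow_Hfib[OF n] by (intro sum.cong) simp_all
qed

lemma reduced_phase_reverse_walk:
  assumes mag: "magnetic_pot ie alpha" and n: "n \<ge> 1" and c: "c \<in> mcycles src tgt n"
  shows "flux alpha (Pproj cd c0 m (walk_chain ie (reverse_walk ie c))) + ip (walk_tau tau (reverse_walk ie c)) k =
         - (flux alpha (Pproj cd c0 m (walk_chain ie c)) + ip (walk_tau tau c) k)"
proof -
  obtain x where x: "is_walk src tgt c x x"
    using c unfolding mcycles_iff_closed_walk[OF n] by blast
  have "walk_sum alpha (reverse_walk ie c) = - walk_sum alpha c"
    using mag by (simp add: walk_sum_reverse_walk_antisym magnetic_pot_def)
  moreover have "walk_tau tau (reverse_walk ie c) = - walk_tau tau c"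
    by (simp add: walk_tau_eq_walk_sum walk_sum_reverse_walk_antisym)
  ultimately show ?thesis
    using flux_Pproj_walk_chain[OF mag x] flux_Pproj_walk_chain[OF mag is_walk_reverse_walk[OF x]]
    by (simp add: ip_uminus)
qed

lemma trace_mat_pow_Hfib_shifted_conj:
  assumes mag: "magnetic_pot ie alpha" and n: "n \<ge> 1"
  shows "trace (mat_pow (Hfib src tgt tau alpha V (k + (\<chi> j. - flux alpha (cd j)))) n) =
           (\<Sum>c\<in>mcycles src tgt n. complex_of_real (omega src V c) *
              exp (- \<i> * complex_of_real (flux alpha (Pproj cd c0 m (walk_chain ie c)) + ip (walk_tau tau c) k)))"
  unfolding trace_mat_pow_Hfib_shifted[OF mag n]
  by (rule sum_mcycles_exp_conj[OF n], rule reduced_phase_reverse_walk[OF mag n])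

lemma trace_mat_pow_Hfib_shifted_cos:
  assumes mag: "magnetic_pot ie alpha" and n: "n \<ge> 1"
  shows "trace (mat_pow (Hfib src tgt tau alpha V (k + (\<chi> j. - flux alpha (cd j)))) n) =
           (\<Sum>c\<in>mcycles src tgt n. complex_of_real (omega src V c *
              cos (flux alpha (Pproj cd c0 m (walk_chain ie c)) + ip (walk_tau tau c) k)))"
  unfolding trace_mat_pow_Hfib_shifted_conj[OF mag n]
  by (rule sum_mcycles_cos[OF n], rule reduced_phase_reverse_walk[OF mag n])

lemma trace_mat_pow_Hfib_shifted_Fourier:
  assumes mag: "magnetic_pot ie alpha" and n: "n \<ge> 1" and tau_le: "\<And>e. norm (rvec (tau e)) \<le> T"
  shows "trace (mat_pow (Hfib src tgt tau alpha V (k + (\<chi> j. - flux alpha (cd j)))) n) =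
           (\<Sum>mm\<in>{mm. norm (rvec mm) \<le> real n * T}.
              (\<Sum>c\<in>{c \<in> mcycles src tgt n. walk_tau tau c = mm}. complex_of_real (omega src V c) *
                 exp (- \<i> * complex_of_real (flux alpha (Pproj cd c0 m (walk_chain ie c)))))
              * exp (- \<i> * complex_of_real (ip mm k)))"
  unfolding trace_mat_pow_Hfib_shifted_conj[OF mag n] of_real_add distrib_left exp_add mult.assoc[symmetric]
  by (rule sum_mcycles_group_by_index[OF tau_le])

lemma trace_mat_pow_Hfib_shifted_eq_zero_potential:
  assumes mag: "magnetic_pot ie alpha" and n: "n \<ge> 1" and "m = 0"
  shows "trace (mat_pow (Hfib src tgt tau alpha V (k + (\<chi> j. - flux alpha (cd j)))) n) =
           trace (mat_pow (Hfib src tgt tau (\<lambda>_. 0) V k) n)"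
proof -
  have "flux alpha (Pproj cd c0 m (walk_chain ie c)) = 0" if "c \<in> mcycles src tgt n" for c
    using that \<open>m = 0\<close> Pproj_eq_0_if_no_zero_index_cycles[OF _ walk_chain_in_cycle_space]
    unfolding mcycles_iff_closed_walk[OF n] by (auto simp: flux_def)
  then show ?thesis
    unfolding trace_mat_pow_Hfib_shifted_conj[OF mag n] trace_mat_pow_Hfib_zero_potential[OF n]
    by (intro sum.cong) simp_all
qed

lemma gauge_equivalent_if_fluxes_congruent:
  assumes conn: "\<forall>x y. (x, y) \<in> (range (\<lambda>e. (src e, tgt e)))\<^sup>*"
    and mag1: "magnetic_pot ie a1" and mag2: "magnetic_pot ie a2"
    and congruent: "\<forall>s<m. \<exists>q::int. flux a1 (c0 s) - flux a2 (c0 s) = 2 * pi * of_int q"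
  shows "gauge_equivalent src tgt tau a1 a2 (\<chi> j. flux a1 (cd j) - flux a2 (cd j))"
proof -
  define t where "t = (\<chi> j. flux a1 (cd j) - flux a2 (cd j))"
  define beta where "beta = (\<lambda>e. a1 e - a2 e - ip (tau e) t)"
  have mag: "magnetic_pot ie beta"
    using mag1 mag2 by (simp add: magnetic_pot_def beta_def ip_uminus)
  have flux_beta: "flux beta z = flux a1 z - flux a2 z - ip (tau_chain tau z) t"
    if "z \<in> cycle_space tgt ie" for z
    using that flux_ip_tau[of z t]
    by (simp add: beta_def flux_eq_chain_pairing chain_pairing_diff_left diff_divide_distrib cycle_space_def)
  obtain Q where Q: "\<forall>s<m. flux a1 (c0 s) - flux a2 (c0 s) = 2 * pi * of_int (Q s)"
    using congruent choice[of "\<lambda>s q. s < m \<longrightarrow> flux a1 (c0 s) - flux a2 (c0 s) = 2 * pi * of_int q"]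
    by blast
  have "\<exists>q::int. walk_sum beta c = 2 * pi * of_int q" if "is_walk src tgt c x x" for c x
  proof -
    let ?z = "walk_chain ie c"
    have z: "?z \<in> cycle_space tgt ie"
      using that by (rule walk_chain_in_cycle_space)
    then obtain b where b: "?z = combo cd c0 m (\<lambda>j. tau_chain tau ?z $ j) b"
      by (rule cycle_space_decomp)
    have "flux beta (cd j) = 0" for j
      using flux_beta[OF cd_cycle] by (simp add: tau_chain_cd ip_axis t_def)
    moreover have "flux beta (c0 s) = 2 * pi * of_int (Q s)" if "s < m" for s
      using flux_beta[OF c0_cycle[OF that]] Q that by (simp add: tau_chain_c0 ip_def)
    ultimately have "flux beta ?z = 2 * pi * of_int (\<Sum>s<m. b s * Q s)"
      by (subst b) (simp add: flux_combo sum_distrib_left mult_ac)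
    then have "walk_sum beta c = 2 * pi * of_int (\<Sum>s<m. b s * Q s)"
      by (simp add: flux_walk_chain[OF mag])
    then show ?thesis ..
  qed
  then obtain g where g: "\<forall>e. \<exists>q::int. beta e = g (tgt e) - g (src e) + 2 * pi * of_int q"
    using gauge_potential_exists[OF conn mag] by blast
  have "\<exists>q::int. a1 e = a2 e + g (tgt e) - g (src e) + ip (tau e) t + 2 * pi * of_int q" for e
  proof -
    obtain q :: int where "beta e = g (tgt e) - g (src e) + 2 * pi * of_int q"
      using g by blast
    then have "a1 e = a2 e + g (tgt e) - g (src e) + ip (tau e) t + 2 * pi * of_int q"
      by (simp add: beta_def)
    then show ?thesis ..
  qed
  then show ?thesis
    unfolding gauge_equivalent_def t_def by blast
qed

lemma spec_H_eq_if_fluxes_congruent: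
  assumes "\<forall>x y. (x, y) \<in> (range (\<lambda>e. (src e, tgt e)))\<^sup>*"
    and "magnetic_pot ie a1" and "magnetic_pot ie a2"
    and "\<forall>s<m. \<exists>q::int. flux a1 (c0 s) - flux a2 (c0 s) = 2 * pi * of_int q"
  shows "spec_H src tgt tau a1 V = spec_H src tgt tau a2 V"
  by (rule spec_H_eq_if_gauge_equivalent[OF gauge_equivalent_if_fluxes_congruent[OF assms]])

end

theorem corollary3p7:
  fixes src tgt :: "'e::finite \<Rightarrow> 'v::finite" and ie :: "'e \<Rightarrow> 'e"
    and tau :: "'e \<Rightarrow> int^'d::finite" and alpha :: "'e \<Rightarrow> real" and V :: "'v \<Rightarrow> real"
    and cd :: "'d \<Rightarrow> 'e \<Rightarrow> int" and c0 :: "nat \<Rightarrow> 'e \<Rightarrow> int" and m :: nat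
  assumes G: "quot_graph src tgt ie tau"
    and mag: "magnetic_pot ie alpha"
    and cd_cyc: "\<forall>j. cd j \<in> cycle_space tgt ie"
    and c0_cyc: "\<forall>s<m. c0 s \<in> cycle_space tgt ie"
    and span: "\<forall>z\<in>cycle_space tgt ie. \<exists>a b. z = combo cd c0 m a b"
    and indep: "\<forall>a b. combo cd c0 m a b = (\<lambda>_. 0) \<longrightarrow> (\<forall>j. a j = 0) \<and> (\<forall>s<m. b s = 0)"
    and card_basis: "int (CARD('d) + m) = betti src"
    and tau_cd: "\<forall>j. tau_chain tau (cd j) = axis j 1"
    and tau_c0: "\<forall>s<m. tau_chain tau (c0 s) = 0"
    and c0_basis_C0: "\<forall>z\<in>cycle_space tgt ie. tau_chain tau z = 0 \<longrightarrow>
                         (\<exists>b. z = (\<lambda>e. \<Sum>s<m. b s * c0 s e))"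
  defines "ko \<equiv> (\<chi> j. - flux alpha (cd j))"
    and "phio \<equiv> (\<lambda>c k. flux alpha (Pproj cd c0 m (walk_chain ie c)) + ip (walk_tau tau c) k)"
    and "tauplus \<equiv> Max (range (\<lambda>e. norm (rvec (tau e))))"
  shows
    "(\<forall>n\<ge>1. \<forall>k. trace (mat_pow (Hfib src tgt tau alpha V (k + ko)) n)
          = (\<Sum>c\<in>mcycles src tgt n. complex_of_real (omega src V c) * exp (- \<i> * complex_of_real (phio c k)))
      \<and> trace (mat_pow (Hfib src tgt tau alpha V (k + ko)) n)
          = (\<Sum>c\<in>mcycles src tgt n. complex_of_real (omega src V c * cos (phio c k)))
      \<and> trace (mat_pow (Hfib src tgt tau alpha V (k + ko)) n)
          = (\<Sum>mm\<in>{mm :: int^'d. norm (rvec mm) \<le> real n * tauplus}.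
               (\<Sum>c\<in>{c\<in>mcycles src tgt n. walk_tau tau c = mm}.
                  complex_of_real (omega src V c)
                  * exp (- \<i> * complex_of_real (flux alpha (Pproj cd c0 m (walk_chain ie c)))))
               * exp (- \<i> * complex_of_real (ip mm k))))
   \<and> (betti src = int CARD('d) \<longrightarrow>
        (\<forall>z\<in>cycle_space tgt ie. Pproj cd c0 m z = (\<lambda>_. 0))
      \<and> (\<forall>n\<ge>1. \<forall>k. trace (mat_pow (Hfib src tgt tau alpha V (k + ko)) n)
                  = trace (mat_pow (Hfib src tgt tau (\<lambda>_. 0) V k) n)))
   \<and> (\<forall>alpha1 alpha2. magnetic_pot ie alpha1 \<longrightarrow> magnetic_pot ie alpha2 \<longrightarrow>
        (\<forall>s<m. \<exists>q::int. flux alpha1 (c0 s) - flux alpha2 (c0 s) = 2 * pi * real_of_int q) \<longrightarrow>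
        spec_H src tgt tau alpha1 V = spec_H src tgt tau alpha2 V)"
proof -
  interpret cycle_basis src tgt ie tau cd c0 m
    using G cd_cyc c0_cyc span indep tau_cd tau_c0 by unfold_locales (auto simp: quot_graph_def)
  have conn: "\<forall>x y. (x, y) \<in> (range (\<lambda>e. (src e, tgt e)))\<^sup>*"
    using G by (simp add: quot_graph_def)
  have tau_le: "norm (rvec (tau e)) \<le> tauplus" for e
    unfolding tauplus_def by (rule Max_ge) simp_all
  have m0: "m = 0" if "betti src = int CARD('d)"
    using card_basis that by simp
  show ?thesis
    unfolding ko_def phio_def
    using trace_mat_pow_Hfib_shifted_conj[OF mag] trace_mat_pow_Hfib_shifted_cos[OF mag]
      trace_mat_pow_Hfib_shifted_Fourier[OF mag _ tau_le]
      Pproj_eq_0_if_no_zero_index_cycles[OF m0] trace_mat_pow_Hfib_shifted_eq_zero_potential[OF mag _ m0]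
      spec_H_eq_if_fluxes_congruent[OF conn]
    by blast
qed

end
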